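(* Let $\mathcal I,\mathcal J$ be ideals on $\omega$ with $\mathcal I\subseteq\mathcal J$. For every cardinal $\kappa\le\mathfrak c$ there exists a Hausdorff, separable, sequentially compact, compact (hence normal) space $X$ with $|X|=\kappa$ such that only countably many points of $X$ are isolated and for every sequence $(f_n)$ in $\mathcal C(X)$, if $(f_n)$ is $\mathcal I$-pointwise convergent to $0$ then $(f_n)$ is $\mathcal J$-$\sigma$-uniformly convergent to $0$.
   Context: $\mathfrak c$ denotes the cardinality of $\mathbb R$. An ideal on $\omega$ is a family $\mathcal I\subseteq\mathcal P(\omega)$ closed under finite unions and subsets, containing all finite sets, with $\omega\notin\mathcal I$. A real sequence $(a_n)$ is $\mathcal I$-convergent to $0$ if $\{n:|a_n|\ge\varepsilon\}\in\mathcal I$ for all $\varepsilon>0$. For a sequence $(f_n)$ of real functions on a set $X$: $\mathcal I$-pointwise convergence to $0$ means $(f_n(x))$ is $\mathcal I$-convergent to $0$ for each $x$; $\mathcal J$-uniform means $\{n:\exists x\in X\,(|f_n(x)|\ge\varepsilon)\}\in\mathcal J$ for each $\varepsilon>0$; $\mathcal J$-$\sigma$-uniform means $X=\bigcup_{k\in\omega}X_k$ with $(f_n\restriction X_k)$ $\mathcal J$-uniformly convergent to $0$ for each $k$. $\mathcal C(X)$ = continuous real functions on $X$. *)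

theory Defs
  imports "HOL-Analysis.Analysis" "HOL-Library.Equipollence"
begin

definition ideal_on_nat :: "nat set set \<Rightarrow> bool" where
  "ideal_on_nat \<I> \<longleftrightarrow>
     (\<forall>A\<in>\<I>. \<forall>B\<in>\<I>. A \<union> B \<in> \<I>) \<and>
     (\<forall>A\<in>\<I>. \<forall>B. B \<subseteq> A \<longrightarrow> B \<in> \<I>) \<and>
     (\<forall>A. finite A \<longrightarrow> A \<in> \<I>) \<and>
     UNIV \<notin> \<I>"

definition ideal_conv_zero :: "nat set set \<Rightarrow> (nat \<Rightarrow> real) \<Rightarrow> bool" where
  "ideal_conv_zero \<I> a \<longleftrightarrow> (\<forall>\<epsilon>>0. {n. \<bar>a n\<bar> \<ge> \<epsilon>} \<in> \<I>)"

definition ideal_pointwise_zero :: "nat set set \<Rightarrow> 'a set \<Rightarrow> (nat \<Rightarrow> 'a \<Rightarrow> real) \<Rightarrow> bool" where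
  "ideal_pointwise_zero \<I> S f \<longleftrightarrow> (\<forall>x\<in>S. ideal_conv_zero \<I> (\<lambda>n. f n x))"

definition ideal_uniform_zero :: "nat set set \<Rightarrow> 'a set \<Rightarrow> (nat \<Rightarrow> 'a \<Rightarrow> real) \<Rightarrow> bool" where
  "ideal_uniform_zero \<J> S f \<longleftrightarrow> (\<forall>\<epsilon>>0. {n. \<exists>x\<in>S. \<bar>f n x\<bar> \<ge> \<epsilon>} \<in> \<J>)"

definition ideal_sigma_uniform_zero :: "nat set set \<Rightarrow> 'a set \<Rightarrow> (nat \<Rightarrow> 'a \<Rightarrow> real) \<Rightarrow> bool" where
  "ideal_sigma_uniform_zero \<J> S f \<longleftrightarrow>
     (\<exists>Y :: nat \<Rightarrow> 'a set. S = (\<Union>k. Y k) \<and> (\<forall>k. ideal_uniform_zero \<J> (Y k) f))"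

definition seq_compact_space :: "'a topology \<Rightarrow> bool" where
  "seq_compact_space X \<longleftrightarrow>
     (\<forall>\<sigma> :: nat \<Rightarrow> 'a. (\<forall>n. \<sigma> n \<in> topspace X) \<longrightarrow>
        (\<exists>l r. l \<in> topspace X \<and> strict_mono r \<and> limitin X (\<sigma> \<circ> r) l sequentially))"

definition isolated_points :: "'a topology \<Rightarrow> 'a set" where
  "isolated_points X = {x \<in> topspace X. openin X {x}}"

end

theory Submission
  imports Defs
begin

(* X is the one-point compactification of Mrowka's Psi-space of an almost disjoint family
   {S a | a \<in> A} of infinite subsets of a countable set D; the branches of the dyadic tree
   provide such a family of size continuum.  Every neighbourhood of the point at infinity p
   contains all but finitely many points of A, so a continuous real function differs from its
   value at p at only countably many points.  Hence a sequence (f n) of continuous functions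
   yields only countably many sequences (f n x)_n, and X is the countable union of the sets on
   which (f n x)_n does not depend on x; on each of them \<I>-convergence at a single point
   already is \<J>-uniform convergence. *)

lemma ideal_sigma_uniform_zero_if_countable_sequences:
  fixes f :: "nat \<Rightarrow> 'a \<Rightarrow> real"
  assumes J: "ideal_on_nat \<J>" and "\<I> \<subseteq> \<J>"
    and pointwise: "ideal_pointwise_zero \<I> S f"
    and countable: "countable ((\<lambda>x n. f n x) ` S)"
  shows "ideal_sigma_uniform_zero \<J> S f"
proof -
  let ?V = "(\<lambda>x n. f n x) ` S"
  define Y where "Y k = {x \<in> S. (\<lambda>n. f n x) = from_nat_into ?V k}" for k
  have "S \<subseteq> (\<Union>k. Y k)"
  proof
    fix x assume "x \<in> S"
    then have "x \<in> Y (to_nat_on ?V (\<lambda>n. f n x))"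
      using countable by (simp add: Y_def)
    then show "x \<in> (\<Union>k. Y k)" by blast
  qed
  then have cover: "S = (\<Union>k. Y k)" by (auto simp: Y_def)
  have "ideal_uniform_zero \<J> (Y k) f" for k
    unfolding ideal_uniform_zero_def
  proof (intro allI impI)
    fix \<epsilon> :: real assume "\<epsilon> > 0"
    show "{n. \<exists>x\<in>Y k. \<epsilon> \<le> \<bar>f n x\<bar>} \<in> \<J>"
    proof (cases "Y k = {}")
      case True
      then show ?thesis using J by (simp add: ideal_on_nat_def)
    next
      case False
      then obtain x0 where x0: "x0 \<in> Y k" by blast
      then have "{n. \<exists>x\<in>Y k. \<epsilon> \<le> \<bar>f n x\<bar>} = {n. \<epsilon> \<le> \<bar>f n x0\<bar>}"
        by (auto simp: Y_def fun_eq_iff)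
      moreover have "{n. \<epsilon> \<le> \<bar>f n x0\<bar>} \<in> \<I>"
        using pointwise x0 \<open>\<epsilon> > 0\<close>
        by (auto simp: Y_def ideal_pointwise_zero_def ideal_conv_zero_def)
      ultimately show ?thesis using \<open>\<I> \<subseteq> \<J>\<close> by auto
    qed
  qed
  then show ?thesis
    unfolding ideal_sigma_uniform_zero_def using cover by blast
qed

lemma limitin_subsequence_if_finitely_many_outside:
  fixes \<sigma> :: "nat \<Rightarrow> 'a" and N :: "nat set"
  assumes l: "l \<in> topspace X" and N: "infinite N"
    and outside: "\<And>U. openin X U \<Longrightarrow> l \<in> U \<Longrightarrow> finite {n \<in> N. \<sigma> n \<notin> U}"
  shows "\<exists>r. strict_mono r \<and> limitin X (\<sigma> \<circ> r) l sequentially"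
proof (intro exI conjI)
  let ?r = "enumerate N"
  show mono: "strict_mono ?r" using N by (rule strict_mono_enumerate)
  show "limitin X (\<sigma> \<circ> ?r) l sequentially"
    unfolding limitin_def
  proof (intro conjI allI impI)
    fix U assume U: "openin X U \<and> l \<in> U"
    have "{n. (\<sigma> \<circ> ?r) n \<notin> U} \<subseteq> ?r -` {n \<in> N. \<sigma> n \<notin> U}"
      using enumerate_in_set[OF N] by auto
    moreover have "finite (?r -` {n \<in> N. \<sigma> n \<notin> U})"
      using outside U strict_mono_imp_inj_on[OF mono] by (intro finite_vimageI) auto
    ultimately have "finite {n. (\<sigma> \<circ> ?r) n \<notin> U}" by (rule finite_subset)
    then show "\<forall>\<^sub>F n in sequentially. (\<sigma> \<circ> ?r) n \<in> U"
      unfolding cofinite_eq_sequentially[symmetric] eventually_cofinite .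
  qed (rule l)
qed

(* p is the point at infinity: points of D are isolated, the neighbourhoods of a \<in> A are {a} \<union> S a
   minus finitely many points, and a neighbourhood of p misses only finitely many a \<in> A and,
   outside the sets S a of these, only finitely many points of D. *)
definition psi_open :: "'a \<Rightarrow> 'a set \<Rightarrow> 'a set \<Rightarrow> ('a \<Rightarrow> 'a set) \<Rightarrow> 'a set \<Rightarrow> bool" where
  "psi_open p D A S U \<longleftrightarrow> U \<subseteq> insert p (D \<union> A) \<and> (\<forall>a\<in>U \<inter> A. finite (S a - U)) \<and>
     (p \<in> U \<longrightarrow> finite (A - U) \<and> finite (D - U - \<Union>(S ` (A - U))))"

lemma istopology_psi_open: "istopology (psi_open p D A S)"
  unfolding istopology_def
proof (intro conjI allI impI)
  fix U V assume U: "psi_open p D A S U" and V: "psi_open p D A S V"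
  have "S a - U \<inter> V = (S a - U) \<union> (S a - V)" for a by blast
  moreover have "A - U \<inter> V = (A - U) \<union> (A - V)" by blast
  moreover have "D - U \<inter> V - \<Union>(S ` (A - U \<inter> V)) \<subseteq>
      (D - U - \<Union>(S ` (A - U))) \<union> (D - V - \<Union>(S ` (A - V)))" by blast
  ultimately show "psi_open p D A S (U \<inter> V)"
    using U V unfolding psi_open_def by (auto intro: finite_subset)
next
  fix \<U> assume \<U>: "\<forall>U\<in>\<U>. psi_open p D A S U"
  have S_finite: "finite (S a - \<Union>\<U>)" if a: "a \<in> \<Union>\<U> \<inter> A" for a
  proof -
    obtain U where "U \<in> \<U>" "a \<in> U" "a \<in> A" using a by blast
    then have "finite (S a - U)" using \<U> unfolding psi_open_def by auto
    then show ?thesis by (rule finite_subset[rotated]) (use \<open>U \<in> \<U>\<close> in blast)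
  qed
  have "finite (A - \<Union>\<U>) \<and> finite (D - \<Union>\<U> - \<Union>(S ` (A - \<Union>\<U>)))" if p: "p \<in> \<Union>\<U>"
  proof
    obtain U where U: "U \<in> \<U>" "p \<in> U" using p by blast
    then have A_U: "finite (A - U)" and D_U: "finite (D - U - \<Union>(S ` (A - U)))"
      using \<U> unfolding psi_open_def by auto
    show "finite (A - \<Union>\<U>)" by (rule finite_subset[OF _ A_U]) (use U in blast)
    have "D - \<Union>\<U> - \<Union>(S ` (A - \<Union>\<U>)) \<subseteq>
        (D - U - \<Union>(S ` (A - U))) \<union> (\<Union>a\<in>(A - U) \<inter> \<Union>\<U>. S a - \<Union>\<U>)"
      using U by blast
    moreover have "finite (\<Union>a\<in>(A - U) \<inter> \<Union>\<U>. S a - \<Union>\<U>)"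
      using A_U S_finite by (intro finite_UN_I) auto
    ultimately show "finite (D - \<Union>\<U> - \<Union>(S ` (A - \<Union>\<U>)))"
      using D_U by (meson finite_Un finite_subset)
  qed
  moreover have "\<Union>\<U> \<subseteq> insert p (D \<union> A)" using \<U> unfolding psi_open_def by blast
  ultimately show "psi_open p D A S (\<Union>\<U>)" using S_finite unfolding psi_open_def by blast
qed

definition psi_topology :: "'a \<Rightarrow> 'a set \<Rightarrow> 'a set \<Rightarrow> ('a \<Rightarrow> 'a set) \<Rightarrow> 'a topology" where
  "psi_topology p D A S = topology (psi_open p D A S)"

lemma openin_psi_topology: "openin (psi_topology p D A S) = psi_open p D A S"
  unfolding psi_topology_def using istopology_psi_open by (rule topology_inverse')

locale psi_space =
  fixes p :: 'a and D A :: "'a set" and S :: "'a \<Rightarrow> 'a set"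
  assumes p_notin_D: "p \<notin> D" and p_notin_A: "p \<notin> A" and disjoint_A_D: "A \<inter> D = {}"
    and S_subset_D: "\<And>a. a \<in> A \<Longrightarrow> S a \<subseteq> D"
    and infinite_S: "\<And>a. a \<in> A \<Longrightarrow> infinite (S a)"
    and almost_disjoint_S: "\<And>a b. a \<in> A \<Longrightarrow> b \<in> A \<Longrightarrow> a \<noteq> b \<Longrightarrow> finite (S a \<inter> S b)"
    and countable_D: "countable D"
begin

abbreviation X where "X \<equiv> psi_topology p D A S"

lemma topspace_psi: "topspace X = insert p (D \<union> A)"
proof -
  have "psi_open p D A S (insert p (D \<union> A))"
    unfolding psi_open_def using S_subset_D by (auto intro: finite_subset[OF _ finite.emptyI])
  then show ?thesis
    unfolding topspace_def openin_psi_topology psi_open_def by blast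
qed

lemma openin_psi_avoiding_p:
  assumes "U \<subseteq> D \<union> A" and "\<And>a. a \<in> U \<inter> A \<Longrightarrow> finite (S a - U)"
  shows "openin X U"
  using assms p_notin_D p_notin_A unfolding openin_psi_topology psi_open_def by blast

lemma openin_psi_singleton: "d \<in> D \<Longrightarrow> openin X {d}"
  using disjoint_A_D by (intro openin_psi_avoiding_p) auto

lemma openin_psi_nbhd:
  assumes "a \<in> A" and "finite F"
  shows "openin X (insert a (S a - F))"
proof (rule openin_psi_avoiding_p)
  show "insert a (S a - F) \<subseteq> D \<union> A" using assms S_subset_D by blast
  fix b assume "b \<in> insert a (S a - F) \<inter> A"
  then have "b = a" using assms S_subset_D disjoint_A_D by blast
  then show "finite (S b - insert a (S a - F))"
    using \<open>finite F\<close> by (auto intro: finite_subset)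
qed

lemma openin_psi_complement:
  assumes F: "finite F" "F \<subseteq> D \<union> A"
  shows "openin X (topspace X - (F \<union> \<Union>(S ` (F \<inter> A))))"
proof -
  define U where "U = topspace X - (F \<union> \<Union>(S ` (F \<inter> A)))"
  have A_U: "A - U = F \<inter> A"
    using S_subset_D disjoint_A_D by (auto simp: U_def topspace_psi)
  have "finite (S b - U)" if b: "b \<in> U \<inter> A" for b
  proof -
    have "b \<notin> F" using b by (simp add: U_def)
    have "S b - U \<subseteq> F \<union> (\<Union>a\<in>F \<inter> A. S b \<inter> S a)"
      using S_subset_D b by (auto simp: U_def topspace_psi)
    moreover have "finite (\<Union>a\<in>F \<inter> A. S b \<inter> S a)"
      using b \<open>b \<notin> F\<close> F(1) almost_disjoint_S by (intro finite_UN_I) auto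
    ultimately show ?thesis using F(1) by (meson finite_Un finite_subset)
  qed
  moreover have "D - U - \<Union>(S ` (A - U)) \<subseteq> F"
    unfolding A_U by (auto simp: U_def topspace_psi)
  ultimately have "psi_open p D A S U"
    unfolding psi_open_def A_U using F(1) by (auto simp: U_def topspace_psi intro: finite_subset)
  then show ?thesis by (simp add: openin_psi_topology U_def)
qed

lemma psi_separate_points:
  assumes x: "x \<in> D \<union> A" and y: "y \<in> topspace X" "x \<noteq> y"
  shows "\<exists>U V. openin X U \<and> openin X V \<and> x \<in> U \<and> y \<in> V \<and> disjnt U V"
proof -
  have co_singleton: "openin X (topspace X - {d})" if "d \<in> D" for d
  proof -
    have "{d} \<inter> A = {}" using that disjoint_A_D by blast
    then show ?thesis using openin_psi_complement[of "{d}"] that by simp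
  qed
  consider "x \<in> D" | "x \<in> A" "y = p" | "x \<in> A" "y \<in> D" | "x \<in> A" "y \<in> A" "y \<noteq> x"
    using x y by (auto simp: topspace_psi)
  then show ?thesis
  proof cases
    case 1
    then show ?thesis
      using y openin_psi_singleton co_singleton
      by (intro exI[of _ "{x}"] exI[of _ "topspace X - {x}"]) (auto simp: disjnt_def)
  next
    case 2
    have "openin X (topspace X - insert x (S x))"
      using openin_psi_complement[of "{x}"] 2 by auto
    moreover have "p \<notin> insert x (S x)" using 2 S_subset_D p_notin_A p_notin_D by blast
    ultimately show ?thesis
      using 2 y openin_psi_nbhd[of x "{}"]
      by (intro exI[of _ "insert x (S x)"] exI[of _ "topspace X - insert x (S x)"])
        (auto simp: disjnt_def)
  next
    case 3
    then have "x \<in> topspace X" by (simp add: topspace_psi)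
    then show ?thesis
      using 3 y openin_psi_singleton co_singleton
      by (intro exI[of _ "topspace X - {y}"] exI[of _ "{y}"]) (auto simp: disjnt_def)
  next
    case 4
    have "x \<notin> S y" "y \<notin> S x" using 4 S_subset_D disjoint_A_D by blast+
    then show ?thesis
      using 4 openin_psi_nbhd[of x "S x \<inter> S y"] openin_psi_nbhd[of y "{}"]
        almost_disjoint_S[of x y]
      by (intro exI[of _ "insert x (S x - S x \<inter> S y)"] exI[of _ "insert y (S y - {})"])
        (auto simp: disjnt_def)
  qed
qed

lemma Hausdorff_space_psi: "Hausdorff_space X"
  unfolding Hausdorff_space_def
proof (intro allI impI)
  fix x y assume xy: "x \<in> topspace X \<and> y \<in> topspace X \<and> x \<noteq> y"
  show "\<exists>U V. openin X U \<and> openin X V \<and> x \<in> U \<and> y \<in> V \<and> disjnt U V"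
  proof (cases "x = p")
    case True
    then have "y \<in> D \<union> A" using xy by (auto simp: topspace_psi)
    then obtain U V where "openin X U" "openin X V" "y \<in> U" "x \<in> V" "disjnt U V"
      using psi_separate_points[of y x] xy by auto
    then show ?thesis by (meson disjnt_sym)
  next
    case False
    then show ?thesis using psi_separate_points[of x y] xy by (auto simp: topspace_psi)
  qed
qed

lemma separable_space_psi: "separable_space X"
  unfolding separable_space_def
proof (intro exI conjI)
  show "countable (insert p D)" using countable_D by simp
  show "insert p D \<subseteq> topspace X" by (auto simp: topspace_psi)
  show "X closure_of insert p D = topspace X"
  proof (rule subset_antisym[OF closure_of_subset_topspace], rule subsetI)
    fix x assume x: "x \<in> topspace X"
    show "x \<in> X closure_of insert p D"
    proof (cases "x \<in> A")
      case True
      have "T \<inter> S x \<noteq> {}" if "openin X T" "x \<in> T" for T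
      proof
        assume "T \<inter> S x = {}"
        moreover have "finite (S x - T)" using that True by (auto simp: openin_psi_topology psi_open_def)
        ultimately show False using infinite_S[OF True] by (simp add: Diff_triv inf_commute)
      qed
      then show ?thesis
        using x S_subset_D[OF True] by (auto simp: in_closure_of)
    next
      case False
      then have "x \<in> insert p D" using x by (simp add: topspace_psi)
      then show ?thesis using x closure_of_subset[of "insert p D" X] by (auto simp: topspace_psi)
    qed
  qed
qed

lemma countable_isolated_points_psi: "countable (isolated_points X)"
proof (rule countable_subset)
  show "countable (insert p D)" using countable_D by simp
  show "isolated_points X \<subseteq> insert p D"
  proof
    fix x assume x: "x \<in> isolated_points X"
    show "x \<in> insert p D"
    proof (rule ccontr)
      assume "x \<notin> insert p D"
      then have "x \<in> A" using x by (auto simp: isolated_points_def topspace_psi)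
      moreover have "finite (S x - {x})"
        using x \<open>x \<in> A\<close> by (auto simp: isolated_points_def openin_psi_topology psi_open_def)
      ultimately show False using infinite_S by simp
    qed
  qed
qed

lemma compact_space_psi: "compact_space X"
  unfolding compact_space_alt
proof (intro allI impI)
  fix \<U> assume \<U>: "(\<forall>U\<in>\<U>. openin X U) \<and> topspace X \<subseteq> \<Union>\<U>"
  then have "\<forall>x\<in>topspace X. \<exists>U\<in>\<U>. x \<in> U" by blast
  then obtain V where V: "\<And>x. x \<in> topspace X \<Longrightarrow> V x \<in> \<U> \<and> x \<in> V x" by metis
  have V_open: "psi_open p D A S (V x)" if "x \<in> topspace X" for x
    using V[OF that] \<U> by (auto simp: openin_psi_topology)
  have p: "p \<in> topspace X" by (simp add: topspace_psi)
  define A0 where "A0 = A - V p"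
  define T where "T = insert p A0 \<union> (D - V p - \<Union>(S ` A0)) \<union> (\<Union>a\<in>A0. S a - V a)"
  have "finite A0" "finite (D - V p - \<Union>(S ` A0))"
    using V_open[OF p] V[OF p] by (auto simp: A0_def psi_open_def)
  moreover have "finite (S a - V a)" if "a \<in> A0" for a
    using that V_open[of a] V[of a] by (auto simp: A0_def psi_open_def topspace_psi)
  ultimately have "finite T" by (simp add: T_def)
  have T_sub: "T \<subseteq> topspace X"
    using S_subset_D by (auto simp: T_def A0_def topspace_psi)
  have "topspace X \<subseteq> V p \<union> T \<union> (\<Union>a\<in>A0. V a)"
    by (auto simp: T_def A0_def topspace_psi)
  also have "\<dots> \<subseteq> \<Union>(V ` T)"
  proof -
    have "x \<in> V x" if "x \<in> T" for x using V T_sub that by blast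
    moreover have "p \<in> T" "A0 \<subseteq> T" by (auto simp: T_def)
    ultimately show ?thesis by blast
  qed
  finally show "\<exists>\<F>. finite \<F> \<and> \<F> \<subseteq> \<U> \<and> topspace X \<subseteq> \<Union>\<F>"
    using \<open>finite T\<close> V T_sub by (intro exI[of _ "V ` T"]) auto
qed

lemma limitin_psi_p:
  assumes \<sigma>: "\<And>n. \<sigma> n \<in> topspace X" and fibres: "\<And>x. finite {n. \<sigma> n = x}"
    and S_rarely: "\<And>a. a \<in> A \<Longrightarrow> finite {n. \<sigma> n \<in> S a}"
  shows "limitin X \<sigma> p sequentially"
  unfolding limitin_def
proof (intro conjI allI impI)
  show "p \<in> topspace X" by (simp add: topspace_psi)
  fix U assume U: "openin X U \<and> p \<in> U"
  let ?F = "(A - U) \<union> (D - U - \<Union>(S ` (A - U)))"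
  have "finite ?F" using U by (auto simp: openin_psi_topology psi_open_def)
  have "topspace X - U \<subseteq> ?F \<union> (\<Union>a\<in>A - U. S a)"
    using U by (auto simp: topspace_psi)
  then have "{n. \<sigma> n \<notin> U} \<subseteq> (\<Union>x\<in>?F. {n. \<sigma> n = x}) \<union> (\<Union>a\<in>A - U. {n. \<sigma> n \<in> S a})"
    using \<sigma> by blast
  moreover have "finite (\<Union>a\<in>A - U. {n. \<sigma> n \<in> S a})"
    using \<open>finite ?F\<close> S_rarely by auto
  ultimately have "finite {n. \<sigma> n \<notin> U}"
    using \<open>finite ?F\<close> fibres by (meson finite_UN_I finite_Un finite_subset)
  then show "\<forall>\<^sub>F n in sequentially. \<sigma> n \<in> U"
    unfolding cofinite_eq_sequentially[symmetric] eventually_cofinite .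
qed

lemma seq_compact_space_psi: "seq_compact_space X"
  unfolding seq_compact_space_def
proof (intro allI impI)
  fix \<sigma> :: "nat \<Rightarrow> 'a" assume \<sigma>: "\<forall>n. \<sigma> n \<in> topspace X"
  have converges: "\<exists>l r. l \<in> topspace X \<and> strict_mono r \<and> limitin X (\<sigma> \<circ> r) l sequentially"
    if "l \<in> topspace X" "infinite N"
      "\<And>U. openin X U \<Longrightarrow> l \<in> U \<Longrightarrow> finite {n \<in> N. \<sigma> n \<notin> U}" for l N
    using limitin_subsequence_if_finitely_many_outside[OF that] that(1) by blast
  consider x where "infinite {n. \<sigma> n = x}"
    | a where "\<And>x. finite {n. \<sigma> n = x}" "a \<in> A" "infinite {n. \<sigma> n \<in> S a}"
    | "\<And>x. finite {n. \<sigma> n = x}" "\<And>a. a \<in> A \<Longrightarrow> finite {n. \<sigma> n \<in> S a}"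
    by blast
  then show "\<exists>l r. l \<in> topspace X \<and> strict_mono r \<and> limitin X (\<sigma> \<circ> r) l sequentially"
  proof cases
    case (1 x)
    then obtain n where "\<sigma> n = x" using infinite_imp_nonempty by fastforce
    show ?thesis
    proof (rule converges)
      show "x \<in> topspace X" using \<sigma> \<open>\<sigma> n = x\<close> by blast
      fix U assume "x \<in> U"
      then have "{m \<in> {n. \<sigma> n = x}. \<sigma> m \<notin> U} = {}" by blast
      then show "finite {m \<in> {n. \<sigma> n = x}. \<sigma> m \<notin> U}" by (metis finite.emptyI)
    qed (rule 1)
  next
    case (2 a)
    show ?thesis
    proof (rule converges)
      show "a \<in> topspace X" using 2 by (simp add: topspace_psi)
      fix U assume "openin X U" "a \<in> U"
      then have "finite (S a - U)" using 2 by (auto simp: openin_psi_topology psi_open_def)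
      moreover have "{n \<in> {n. \<sigma> n \<in> S a}. \<sigma> n \<notin> U} = (\<Union>x\<in>S a - U. {n. \<sigma> n = x})" by blast
      ultimately show "finite {n \<in> {n. \<sigma> n \<in> S a}. \<sigma> n \<notin> U}" using 2 by simp
    qed (use 2 in simp)
  next
    case 3
    then have "limitin X \<sigma> p sequentially" using \<sigma> by (simp add: limitin_psi_p)
    then show ?thesis
      by (intro exI[of _ p] exI[of _ id]) (simp add: strict_mono_id topspace_psi)
  qed
qed

lemma countable_points_off_value_at_p:
  assumes g: "continuous_map X euclideanreal g"
  shows "countable {a \<in> A. g a \<noteq> g p}"
proof -
  define V where "V m = {x \<in> topspace X. g x \<in> ball (g p) (inverse (real (Suc m)))}" for m
  have "finite (A - V m)" for m
  proof -
    have "openin X (V m)"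
      unfolding V_def using g by (rule openin_continuous_map_preimage) simp
    moreover have "p \<in> V m" by (simp add: V_def topspace_psi)
    ultimately show ?thesis by (auto simp: openin_psi_topology psi_open_def)
  qed
  moreover have "{a \<in> A. g a \<noteq> g p} \<subseteq> (\<Union>m. A - V m)"
  proof
    fix a assume a: "a \<in> {a \<in> A. g a \<noteq> g p}"
    then obtain m where "inverse (real (Suc m)) < \<bar>g a - g p\<bar>"
      using reals_Archimedean[of "\<bar>g a - g p\<bar>"] by auto
    then have "a \<notin> V m" by (auto simp: V_def dist_real_def abs_minus_commute)
    then show "a \<in> (\<Union>m. A - V m)" using a by blast
  qed
  ultimately show ?thesis
    by (meson countable_UN countable_finite countable_subset countableI_type)
qed

lemma countable_sequences_psi:
  fixes f :: "nat \<Rightarrow> 'a \<Rightarrow> real"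
  assumes "\<And>n. continuous_map X euclideanreal (f n)"
  shows "countable ((\<lambda>x n. f n x) ` topspace X)"
proof -
  let ?G = "\<Union>n. {a \<in> A. f n a \<noteq> f n p}"
  have "countable ?G"
    using countable_points_off_value_at_p[OF assms] by auto
  have "(\<lambda>x n. f n x) ` topspace X \<subseteq> insert (\<lambda>n. f n p) ((\<lambda>x n. f n x) ` (D \<union> ?G))"
  proof (rule image_subsetI)
    fix x assume "x \<in> topspace X"
    then consider "x = p" | "x \<in> D \<union> ?G" | "x \<in> A - ?G" by (auto simp: topspace_psi)
    then show "(\<lambda>n. f n x) \<in> insert (\<lambda>n. f n p) ((\<lambda>x n. f n x) ` (D \<union> ?G))"
      by cases auto
  qed
  moreover have "countable (insert (\<lambda>n. f n p) ((\<lambda>x n. f n x) ` (D \<union> ?G)))"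
    using countable_D \<open>countable ?G\<close> by simp
  ultimately show ?thesis by (rule countable_subset)
qed

end

lemma finite_floor_mult_power2_eq:
  fixes r s :: real
  assumes "r \<noteq> s"
  shows "finite {n::nat. \<lfloor>r * 2 ^ n\<rfloor> = \<lfloor>s * 2 ^ n\<rfloor>}"
proof -
  obtain N :: nat where N: "1 / \<bar>r - s\<bar> < 2 ^ N" using real_arch_pow[of 2] by auto
  have "n < N" if eq: "\<lfloor>r * 2 ^ n\<rfloor> = \<lfloor>s * 2 ^ n\<rfloor>" for n
  proof (rule ccontr)
    assume "\<not> n < N"
    then have "(2::real) ^ N \<le> 2 ^ n" by (intro power_increasing) auto
    then have "1 / \<bar>r - s\<bar> < 2 ^ n" using N by linarith
    then have "1 < 2 ^ n * \<bar>r - s\<bar>" using assms by (simp add: pos_divide_less_eq)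
    moreover have "2 ^ n * \<bar>r - s\<bar> = \<bar>r * 2 ^ n - s * 2 ^ n\<bar>"
      by (simp add: abs_mult left_diff_distrib[symmetric])
    moreover have "\<bar>r * 2 ^ n - s * 2 ^ n\<bar> < 1"
      using eq floor_eq_iff[of "r * 2 ^ n" "\<lfloor>s * 2 ^ n\<rfloor>"]
        floor_eq_iff[of "s * 2 ^ n" "\<lfloor>s * 2 ^ n\<rfloor>"]
      by linarith
    ultimately show False by linarith
  qed
  then show ?thesis by (intro finite_subset[OF _ finite_lessThan[of N]]) auto
qed

(* Level n of the dyadic tree is a copy of \<int>; the branch of r passes through the node \<lfloor>r 2^n\<rfloor>. *)
definition dyadic_branch :: "real \<Rightarrow> (nat \<times> int) set" where
  "dyadic_branch r = range (\<lambda>n. (n, \<lfloor>r * 2 ^ n\<rfloor>))"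

lemma infinite_dyadic_branch: "infinite (dyadic_branch r)"
  unfolding dyadic_branch_def by (rule range_inj_infinite) (simp add: inj_def)

lemma finite_dyadic_branch_Int:
  assumes "r \<noteq> s"
  shows "finite (dyadic_branch r \<inter> dyadic_branch s)"
proof -
  have "dyadic_branch r \<inter> dyadic_branch s \<subseteq>
      (\<lambda>n. (n, \<lfloor>r * 2 ^ n\<rfloor>)) ` {n. \<lfloor>r * 2 ^ n\<rfloor> = \<lfloor>s * 2 ^ n\<rfloor>}"
    by (auto simp: dyadic_branch_def)
  then show ?thesis by (rule finite_surj[OF finite_floor_mult_power2_eq[OF assms]])
qed

lemma exists_psi_space_on:
  assumes "K \<noteq> {}" and "K \<lesssim> (UNIV :: real set)"
  obtains p D A S where "psi_space p D A S" and "insert p (D \<union> A) = K"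
proof -
  obtain p where p: "p \<in> K" using assms(1) by blast
  show ?thesis
  proof (cases "finite K")
    case True
    have "psi_space p (K - {p}) {} (\<lambda>_. {})"
      by unfold_locales (use True countable_finite in auto)
    then show ?thesis using that p by blast
  next
    case False
    then obtain e :: "nat \<Rightarrow> 'a" where e: "inj e" "range e \<subseteq> K - {p}"
      using infinite_countable_subset[of "K - {p}"] by auto
    obtain g :: "'a \<Rightarrow> real" where g: "inj_on g K"
      using assms(2) unfolding lepoll_def by blast
    define \<psi> :: "nat \<times> int \<Rightarrow> 'a" where "\<psi> = e \<circ> to_nat"
    have \<psi>: "inj \<psi>"
      unfolding \<psi>_def using e(1) inj_to_nat by (rule inj_compose)
    define D where "D = range \<psi>"
    define A where "A = K - D - {p}"
    define S where "S a = \<psi> ` dyadic_branch (g a)" for a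
    have "psi_space p D A S"
    proof
      show "p \<notin> D" using e(2) by (auto simp: D_def \<psi>_def)
      show "countable D" by (simp add: D_def)
      fix a assume a: "a \<in> A"
      show "infinite (S a)"
        using infinite_dyadic_branch \<psi> by (simp add: S_def finite_image_iff inj_on_subset)
      fix b assume "b \<in> A" "a \<noteq> b"
      then have "g a \<noteq> g b" using a g by (auto simp: A_def inj_on_def)
      then show "finite (S a \<inter> S b)"
        using finite_dyadic_branch_Int \<psi> by (simp add: S_def image_Int[symmetric])
    qed (auto simp: A_def D_def S_def)
    moreover have "insert p (D \<union> A) = K"
      using p e(2) by (auto simp: A_def D_def \<psi>_def)
    ultimately show ?thesis by (rule that)
  qed
qed

theorem theorem6p4:
  fixes \<I> \<J> :: "nat set set" and K :: "'a set"
  assumes "ideal_on_nat \<I>" and "ideal_on_nat \<J>" and "\<I> \<subseteq> \<J>"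
    and "K \<lesssim> (UNIV :: real set)"
  shows "\<exists>X :: 'a topology.
           topspace X = K \<and>
           Hausdorff_space X \<and> separable_space X \<and> seq_compact_space X \<and>
           compact_space X \<and> normal_space X \<and>
           countable (isolated_points X) \<and>
           (\<forall>f :: nat \<Rightarrow> 'a \<Rightarrow> real.
              (\<forall>n. continuous_map X euclideanreal (f n)) \<longrightarrow>
              ideal_pointwise_zero \<I> (topspace X) f \<longrightarrow>
              ideal_sigma_uniform_zero \<J> (topspace X) f)"
proof (cases "K = {}")
  case True
  then show ?thesis
    by (intro exI[of _ trivial_topology])
      (simp add: separable_space_def seq_compact_space_def isolated_points_def
        compact_Hausdorff_or_regular_imp_normal_space
        ideal_sigma_uniform_zero_if_countable_sequences[OF assms(2,3)])
next
  case False
  then obtain p D A S where "psi_space p D A S" and K: "insert p (D \<union> A) = K"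
    using exists_psi_space_on assms(4) by metis
  then interpret psi_space p D A S by simp
  show ?thesis
  proof (intro exI[of _ X] conjI allI impI)
    show "topspace X = K" using K by (simp add: topspace_psi)
    show "normal_space X"
      using compact_space_psi Hausdorff_space_psi
      by (intro compact_Hausdorff_or_regular_imp_normal_space) auto
    fix f :: "nat \<Rightarrow> 'a \<Rightarrow> real"
    assume "\<forall>n. continuous_map X euclideanreal (f n)" "ideal_pointwise_zero \<I> (topspace X) f"
    then show "ideal_sigma_uniform_zero \<J> (topspace X) f"
      using ideal_sigma_uniform_zero_if_countable_sequences[OF assms(2,3)] countable_sequences_psi
      by blast
  qed (simp_all add: Hausdorff_space_psi separable_space_psi seq_compact_space_psi
      compact_space_psi countable_isolated_points_psi)
qed

end
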